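(* Let $\mathcal{A}$ and $\mathcal{B}$ be von Neumann algebras, let $T:\mathcal{B}\to\mathcal{A}$ be a CP-map and let $B,\tilde B\in\mathcal{B}$ be commuting Hermitian elements. Put $(X,Y):=T(X^\dagger Y)-T(X)^\dagger T(Y)$ for $X,Y\in\mathcal{B}$, $A:=T(B)$, $\tilde A:=T(\tilde B)$, $\Sigma_B^2:=\|(B,B)\|$ and $\Sigma_{\tilde B}^2:=\|(\tilde B,\tilde B)\|$ (with $\Sigma_B,\Sigma_{\tilde B}\ge 0$). Then $$\Sigma_B\,\Sigma_{\tilde B}\ge \tfrac12\,\|[A,\tilde A]\|.$$
   Context: A CP-map $T:\mathcal{B}\to\mathcal{A}$ between von Neumann algebras is a linear, weakly continuous map with $T(\mathbf{1})=\mathbf{1}$ that is completely positive, i.e. $\mathrm{Id}_n\otimes T: M_n\otimes\mathcal{B}\to M_n\otimes\mathcal{A}$ is positive for every $n\in\mathbb{N}$. *)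

theory Defs
  imports "HOL-Analysis.Analysis"
begin

class cstar_algebra = real_normed_algebra_1 + banach +
  fixes scaleC :: "complex \<Rightarrow> 'a \<Rightarrow> 'a"
    and cstar :: "'a \<Rightarrow> 'a"
  assumes scaleC_add_right: "scaleC c (x + y) = scaleC c x + scaleC c y"
    and scaleC_add_left: "scaleC (c + d) x = scaleC c x + scaleC d x"
    and scaleC_scaleC: "scaleC c (scaleC d x) = scaleC (c * d) x"
    and scaleC_one: "scaleC 1 x = x"
    and scaleR_scaleC: "scaleR r x = scaleC (complex_of_real r) x"
    and scaleC_mult_left: "scaleC c x * y = scaleC c (x * y)"
    and scaleC_mult_right: "x * scaleC c y = scaleC c (x * y)"
    and norm_scaleC: "norm (scaleC c x) = cmod c * norm x"
    and cstar_add: "cstar (x + y) = cstar x + cstar y"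
    and cstar_scaleC: "cstar (scaleC c x) = scaleC (cnj c) (cstar x)"
    and cstar_mult: "cstar (x * y) = cstar y * cstar x"
    and cstar_cstar: "cstar (cstar x) = x"
    and cstar_identity: "norm (cstar x * x) = norm x * norm x"

section \<open>Preduals and von Neumann algebras (Sakai: C*-algebras that are dual Banach spaces)\<close>

definition bounded_functional :: "('a::cstar_algebra \<Rightarrow> complex) \<Rightarrow> bool" where
  "bounded_functional \<phi> \<longleftrightarrow>
     (\<forall>x y. \<phi> (x + y) = \<phi> x + \<phi> y) \<and> (\<forall>c x. \<phi> (scaleC c x) = c * \<phi> x) \<and>
     (\<exists>K. \<forall>x. cmod (\<phi> x) \<le> K * norm x)"

definition fnorm :: "('a::cstar_algebra \<Rightarrow> complex) \<Rightarrow> real" where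
  "fnorm \<phi> = Sup {cmod (\<phi> x) | x. norm x \<le> 1}"

text \<open>N is a predual of the C*-algebra: a norm-closed subspace of the dual such that
  the canonical map from the algebra into the dual of N is an isometric bijection.\<close>
definition is_predual :: "('a::cstar_algebra \<Rightarrow> complex) set \<Rightarrow> bool" where
  "is_predual N \<longleftrightarrow>
     N \<subseteq> {\<phi>. bounded_functional \<phi>} \<and>
     (\<lambda>x. 0) \<in> N \<and>
     (\<forall>\<phi>\<in>N. \<forall>\<psi>\<in>N. (\<lambda>x. \<phi> x + \<psi> x) \<in> N) \<and>
     (\<forall>\<phi>\<in>N. \<forall>c. (\<lambda>x. c * \<phi> x) \<in> N) \<and>
     (\<forall>\<phi>. bounded_functional \<phi> \<and> (\<forall>e>0. \<exists>\<psi>\<in>N. fnorm (\<lambda>x. \<phi> x - \<psi> x) < e) \<longrightarrow> \<phi> \<in> N) \<and>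
     (\<forall>a. norm a = Sup {cmod (\<phi> a) | \<phi>. \<phi> \<in> N \<and> fnorm \<phi> \<le> 1}) \<and>
     (\<forall>\<Psi> :: ('a \<Rightarrow> complex) \<Rightarrow> complex.
        (\<forall>\<phi>\<in>N. \<forall>\<psi>\<in>N. \<Psi> (\<lambda>x. \<phi> x + \<psi> x) = \<Psi> \<phi> + \<Psi> \<psi>) \<and>
        (\<forall>\<phi>\<in>N. \<forall>c. \<Psi> (\<lambda>x. c * \<phi> x) = c * \<Psi> \<phi>) \<and>
        (\<exists>K. \<forall>\<phi>\<in>N. cmod (\<Psi> \<phi>) \<le> K * fnorm \<phi>)
        \<longrightarrow> (\<exists>a. \<forall>\<phi>\<in>N. \<Psi> \<phi> = \<phi> a))"

definition von_neumann_algebra :: "'a::cstar_algebra itself \<Rightarrow> bool" where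
  "von_neumann_algebra _ \<longleftrightarrow> (\<exists>N :: ('a \<Rightarrow> complex) set. is_predual N)"

definition predual :: "('a::cstar_algebra \<Rightarrow> complex) set" where
  "predual = (SOME N. is_predual N)"

definition sigma_weak_topology :: "'a::cstar_algebra topology" where
  "sigma_weak_topology = topology_generated_by {\<phi> -` U | \<phi> U. \<phi> \<in> predual \<and> open U}"

definition positive_elem :: "'a::cstar_algebra \<Rightarrow> bool" where
  "positive_elem a \<longleftrightarrow> (\<exists>b. a = cstar b * b)"

text \<open>Elements of M_n(A) are represented as functions i j with i, j < n.
  X is positive in the C*-algebra M_n(A) iff X = Y* Y for some Y in M_n(A).\<close>
definition mat_positive :: "nat \<Rightarrow> (nat \<Rightarrow> nat \<Rightarrow> 'a::cstar_algebra) \<Rightarrow> bool" where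
  "mat_positive n X \<longleftrightarrow>
     (\<exists>Y. \<forall>i<n. \<forall>j<n. X i j = (\<Sum>k<n. cstar (Y k i) * Y k j))"

definition cp_map :: "('b::cstar_algebra \<Rightarrow> 'a::cstar_algebra) \<Rightarrow> bool" where
  "cp_map T \<longleftrightarrow>
     (\<forall>x y. T (x + y) = T x + T y) \<and> (\<forall>c x. T (scaleC c x) = scaleC c (T x)) \<and>
     continuous_map sigma_weak_topology sigma_weak_topology T \<and>
     T 1 = 1 \<and>
     (\<forall>n X. mat_positive n X \<longrightarrow> mat_positive n (\<lambda>i j. T (X i j)))"

definition cp_form :: "('b::cstar_algebra \<Rightarrow> 'a::cstar_algebra) \<Rightarrow> 'b \<Rightarrow> 'b \<Rightarrow> 'a" where
  "cp_form T X Y = T (cstar X * Y) - cstar (T X) * T Y"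

end

theory Submission
  imports Defs "HOL-Computational_Algebra.Formal_Power_Series"
begin

(* For a CP-map T the form (X, Y) = T(X* Y) - T(X)* T(Y) is positive: complete positivity
   applied to the positive matrix [[1, X], [X*, X* X]] presents (X, X) as a Schur complement,
   a sum of two squares w* w.  For commuting hermitian B, B' and real t put Z = B + i t B'; then
     (Z, Z) = (B, B) + t^2 (B', B') - t i[A, A'] >= 0,
   and replacing t by -t gives -p <= t i[A, A'] <= p with p = (B, B) + t^2 (B', B').  Hence
   |t| ||[A, A']|| <= Sigma_B^2 + t^2 Sigma_B'^2 for every real t, and optimising over t gives
   the claim.

   Since the C*-algebras are abstract, the order is built from the axioms: x >= 0 means that x is
   hermitian and x + mu is invertible for every mu > 0.  The key input is that ||h|| or -||h||
   lies in the spectrum of a hermitian h.  This is proved by an elementary averaging argument: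
   otherwise the resolvent of h is bounded on the closed unit disc, and averaging it over roots
   of unity makes the inverse of 1 - h^(2^k) close to 1, contradicting ||h^(2^k)|| = 1.  The
   usual properties of the positive cone follow, and v* v >= 0 is obtained by the argument of
   Kelley and Vaught, with square roots given by the binomial series of sqrt (1 - z). *)

definition of_complex :: "complex \<Rightarrow> 'a::cstar_algebra" where
  "of_complex c = scaleC c 1"

lemma scaleC_conv_of_complex: "scaleC c x = of_complex c * x"
  by (simp add: of_complex_def scaleC_mult_left)

lemma of_complex_commute: "of_complex c * x = x * of_complex c"
  by (simp add: of_complex_def scaleC_mult_left scaleC_mult_right)

lemma mult_of_complex_left: "x * (of_complex c * y) = of_complex c * (x * y)"
  by (metis mult.assoc of_complex_commute)

lemma of_complex_add: "of_complex (c + d) = (of_complex c + of_complex d :: 'a::cstar_algebra)"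
  by (simp add: of_complex_def scaleC_add_left)

lemma of_complex_mult: "of_complex (c * d) = (of_complex c * of_complex d :: 'a::cstar_algebra)"
  by (simp add: of_complex_def scaleC_mult_left scaleC_scaleC)

lemma of_complex_of_real [simp]: "of_complex (complex_of_real r) = (of_real r :: 'a::cstar_algebra)"
  by (simp add: of_complex_def of_real_def scaleR_scaleC)

lemma of_complex_0 [simp]: "of_complex 0 = (0 :: 'a::cstar_algebra)"
  using of_complex_of_real[of 0] by simp

lemma of_complex_1 [simp]: "of_complex 1 = (1 :: 'a::cstar_algebra)"
  using of_complex_of_real[of 1] by simp

lemma of_complex_minus: "of_complex (- c) = (- of_complex c :: 'a::cstar_algebra)"
  by (metis add.right_inverse minus_unique of_complex_0 of_complex_add)

lemma norm_of_complex [simp]: "norm (of_complex c :: 'a::cstar_algebra) = cmod c"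
  by (simp add: of_complex_def norm_scaleC)

lemma norm_of_complex_mult: "norm (of_complex c * x :: 'a::cstar_algebra) = cmod c * norm x"
  by (metis norm_scaleC scaleC_conv_of_complex)

lemma bounded_linear_of_complex: "bounded_linear (of_complex :: complex \<Rightarrow> 'a::cstar_algebra)"
  by (rule bounded_linear_intro[where K=1])
    (simp_all add: of_complex_add of_complex_mult scaleR_conv_of_real)

lemma cstar_0 [simp]: "cstar (0::'a::cstar_algebra) = 0"
  using cstar_add[of "0::'a" 0] by simp

lemma cstar_1 [simp]: "cstar (1::'a::cstar_algebra) = 1"
  by (metis cstar_cstar cstar_mult mult_1_left)

lemma cstar_minus: "cstar (- x :: 'a::cstar_algebra) = - cstar x"
  by (metis add.right_inverse cstar_0 cstar_add minus_unique)

lemma cstar_diff: "cstar (x - y :: 'a::cstar_algebra) = cstar x - cstar y"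
  using cstar_add[of x "- y"] cstar_minus[of y] by simp

lemma cstar_of_complex [simp]: "cstar (of_complex c :: 'a::cstar_algebra) = of_complex (cnj c)"
  by (simp add: of_complex_def cstar_scaleC)

lemma cstar_of_real [simp]: "cstar (of_real r :: 'a::cstar_algebra) = of_real r"
  by (metis cstar_of_complex of_complex_of_real complex_cnj_complex_of_real)

lemma cstar_scaleR: "cstar (scaleR r x :: 'a::cstar_algebra) = scaleR r (cstar x)"
  by (simp add: scaleR_scaleC cstar_scaleC)

lemma cstar_power: "cstar (x ^ n :: 'a::cstar_algebra) = cstar x ^ n"
  by (induction n) (simp_all add: cstar_mult power_commutes)

lemma norm_cstar [simp]: "norm (cstar x :: 'a::cstar_algebra) = norm x"
proof -
  have le: "norm y \<le> norm (cstar y)" for y :: 'a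
  proof (cases "y = 0")
    case False
    have "norm y * norm y \<le> norm (cstar y) * norm y"
      using norm_mult_ineq[of "cstar y" y] by (simp add: cstar_identity)
    then show ?thesis using False by simp
  qed simp
  show ?thesis using le[of x] le[of "cstar x"] by (simp add: cstar_cstar)
qed

lemma bounded_linear_cstar: "bounded_linear (cstar :: 'a::cstar_algebra \<Rightarrow> 'a)"
  by (rule bounded_linear_intro[where K=1]) (simp_all add: cstar_add cstar_scaleR)

lemma of_complex_imaginary_square:
  "of_complex (\<i> * complex_of_real t) * of_complex (\<i> * t) = (- of_real (t\<^sup>2) :: 'a::cstar_algebra)"
proof -
  have "\<i> * complex_of_real t * (\<i> * complex_of_real t) = complex_of_real (- t\<^sup>2)"
    by (simp add: complex_eq_iff power2_eq_square)
  then show ?thesis by (metis of_complex_mult of_complex_of_real of_real_minus)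
qed

lemma of_complex_imaginary_mult:
  "of_complex (\<i> * complex_of_real t) * x = scaleR t (of_complex \<i> * x :: 'a::cstar_algebra)"
  by (simp add: of_complex_mult scaleR_conv_of_real of_complex_commute mult.assoc)

definition hermitian :: "'a::cstar_algebra \<Rightarrow> bool" where
  "hermitian x \<longleftrightarrow> cstar x = x"

lemma hermitian_of_real [simp]: "hermitian (of_real r :: 'a::cstar_algebra)"
  by (simp add: hermitian_def)

lemma hermitian_1 [simp]: "hermitian (1 :: 'a::cstar_algebra)"
  by (simp add: hermitian_def)

lemma hermitian_add: "hermitian x \<Longrightarrow> hermitian y \<Longrightarrow> hermitian (x + y :: 'a::cstar_algebra)"
  by (simp add: hermitian_def cstar_add)

lemma hermitian_diff: "hermitian x \<Longrightarrow> hermitian y \<Longrightarrow> hermitian (x - y :: 'a::cstar_algebra)"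
  by (simp add: hermitian_def cstar_diff)

lemma hermitian_scaleR: "hermitian x \<Longrightarrow> hermitian (scaleR r x :: 'a::cstar_algebra)"
  by (simp add: hermitian_def cstar_scaleR)

lemma hermitian_power: "hermitian x \<Longrightarrow> hermitian (x ^ n :: 'a::cstar_algebra)"
  by (simp add: hermitian_def cstar_power)

lemma hermitian_cstar_mult: "hermitian (cstar x * x :: 'a::cstar_algebra)"
  by (simp add: hermitian_def cstar_mult cstar_cstar)

lemma cstar_mult_add_imaginary:
  fixes u v :: "'a::cstar_algebra"
  assumes "hermitian u" and "hermitian v"
  shows "cstar (u + of_complex (\<i> * t) * v) * (u + of_complex (\<i> * t) * v)
    = u * u + scaleR (t\<^sup>2) (v * v) + of_complex (\<i> * t) * (u * v - v * u)"
proof -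
  let ?c = "of_complex (\<i> * complex_of_real t) :: 'a"
  have star: "cstar (u + ?c * v) = u - ?c * v"
    using assms by (simp add: hermitian_def cstar_add cstar_mult of_complex_minus of_complex_commute)
  have "(u - ?c * v) * (u + ?c * v) = u * u + ?c * (u * v - v * u) - (?c * ?c) * (v * v)"
    by (simp add: algebra_simps mult_of_complex_left[of u] mult_of_complex_left[of v])
  then show ?thesis
    unfolding star by (simp add: of_complex_imaginary_square scaleR_conv_of_real)
qed

lemma hermitian_imaginary_part: "hermitian (of_complex \<i> * (y - cstar y) :: 'a::cstar_algebra)"
proof -
  have "cstar (of_complex \<i> * (y - cstar y)) = (cstar y - y) * of_complex (- \<i>)"
    by (simp add: cstar_mult cstar_diff cstar_cstar)
  also have "\<dots> = of_complex \<i> * (y - cstar y)"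
    by (simp add: of_complex_commute[symmetric] of_complex_minus algebra_simps)
  finally show ?thesis unfolding hermitian_def .
qed

lemma norm_hermitian_square: "hermitian x \<Longrightarrow> norm (x * x :: 'a::cstar_algebra) = norm x * norm x"
  by (metis hermitian_def cstar_identity)

lemma norm_hermitian_power2:
  "hermitian x \<Longrightarrow> norm (x ^ (2 ^ k) :: 'a::cstar_algebra) = norm x ^ (2 ^ k)"
proof (induction k)
  case (Suc k)
  have "x ^ (2 ^ Suc k) = x ^ (2 ^ k) * x ^ (2 ^ k)"
    by (simp add: power_add[symmetric] mult_2)
  then show ?case
    using norm_hermitian_square[OF hermitian_power[OF Suc.prems]] Suc
    by (simp add: power_mult power2_eq_square power_mult_distrib)
qed simp

lemma hermitian_nilpotent:
  assumes "hermitian x" and "x ^ n = (0 :: 'a::cstar_algebra)"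
  shows "x = 0"
proof -
  have "x ^ (2 ^ n) = x ^ n * x ^ (2 ^ n - n)"
    by (simp add: power_add[symmetric] less_imp_le_nat)
  then have "norm x ^ (2 ^ n) = 0"
    using norm_hermitian_power2[OF assms(1), of n] assms(2) by simp
  then show ?thesis by simp
qed

definition invertible_elem :: "'a::monoid_mult \<Rightarrow> bool" where
  "invertible_elem x \<longleftrightarrow> (\<exists>y. x * y = 1 \<and> y * x = 1)"

definition inverse_elem :: "'a::monoid_mult \<Rightarrow> 'a" where
  "inverse_elem x = (SOME y. x * y = 1 \<and> y * x = 1)"

lemma inverse_elem_right: "invertible_elem x \<Longrightarrow> x * inverse_elem x = 1"
  and inverse_elem_left: "invertible_elem x \<Longrightarrow> inverse_elem x * x = 1"
  unfolding invertible_elem_def inverse_elem_def by (metis (mono_tags, lifting) someI_ex)+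

lemma invertible_elemI: "x * y = 1 \<Longrightarrow> z * x = 1 \<Longrightarrow> invertible_elem (x :: 'a::monoid_mult)"
  unfolding invertible_elem_def by (metis mult.assoc mult_1_left mult_1_right)

lemma inverse_elem_eq: "x * y = 1 \<Longrightarrow> y * x = 1 \<Longrightarrow> inverse_elem (x :: 'a::monoid_mult) = y"
  by (metis invertible_elemI inverse_elem_left mult.assoc mult_1_left mult_1_right)

lemma invertible_elem_mult:
  assumes "invertible_elem a" and "invertible_elem (b :: 'a::monoid_mult)"
  shows "invertible_elem (a * b)" and "inverse_elem (a * b) = inverse_elem b * inverse_elem a"
proof -
  have "(a * b) * (inverse_elem b * inverse_elem a) = 1"
    by (metis assms inverse_elem_right mult.assoc mult_1_left)
  moreover have "(inverse_elem b * inverse_elem a) * (a * b) = 1"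
    by (metis assms inverse_elem_left mult.assoc mult_1_left)
  ultimately show "invertible_elem (a * b)" "inverse_elem (a * b) = inverse_elem b * inverse_elem a"
    by (auto intro: invertible_elemI inverse_elem_eq)
qed

lemma invertible_elem_commuting_factor:
  assumes "x * y = y * x" and "invertible_elem (x * y :: 'a::monoid_mult)"
  shows "invertible_elem x"
proof (rule invertible_elemI)
  show "x * (y * inverse_elem (x * y)) = 1" by (metis assms(2) inverse_elem_right mult.assoc)
  show "(inverse_elem (x * y) * y) * x = 1" by (metis assms inverse_elem_left mult.assoc)
qed

lemma invertible_elem_minus_iff: "invertible_elem (- x :: 'a::ring_1) \<longleftrightarrow> invertible_elem x"
  unfolding invertible_elem_def by (metis minus_mult_minus minus_minus)

lemma inverse_elem_diff:
  assumes "invertible_elem a" and "invertible_elem (b :: 'a::ring_1)"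
  shows "inverse_elem a - inverse_elem b = inverse_elem a * (b - a) * inverse_elem b"
  by (simp add: algebra_simps mult.assoc inverse_elem_right[OF assms(2)])
    (simp add: inverse_elem_left[OF assms(1)] flip: mult.assoc)

lemma invertible_elem_of_real: "r \<noteq> 0 \<Longrightarrow> invertible_elem (of_real r :: 'a::real_algebra_1)"
  by (rule invertible_elemI[where y="of_real (1 / r)" and z="of_real (1 / r)"])
    (simp_all flip: of_real_mult)

lemma invertible_elem_scaleR:
  "r \<noteq> 0 \<Longrightarrow> invertible_elem x \<Longrightarrow> invertible_elem (scaleR r x :: 'a::real_algebra_1)"
  by (simp add: scaleR_conv_of_real invertible_elem_mult invertible_elem_of_real)

lemma invertible_elem_of_complex: "c \<noteq> 0 \<Longrightarrow> invertible_elem (of_complex c :: 'a::cstar_algebra)"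
  by (rule invertible_elemI[where y="of_complex (1 / c)" and z="of_complex (1 / c)"])
    (simp_all flip: of_complex_mult)

lemma of_real_mult_commute: "of_real r * x = x * (of_real r :: 'a::real_algebra_1)"
  by (simp add: of_real_def)

text \<open>Jacobson's lemma: \<open>x * y\<close> and \<open>y * x\<close> have the same nonzero spectrum.\<close>
lemma invertible_elem_of_real_add_mult_commute:
  fixes x y :: "'a::real_algebra_1"
  assumes "\<mu> \<noteq> 0" and "invertible_elem (of_real \<mu> + x * y)"
  shows "invertible_elem (of_real \<mu> + y * x)"
proof -
  define W where "W = inverse_elem (of_real \<mu> + x * y)"
  define Z where "Z = scaleR (1 / \<mu>) (1 - y * W * x)"
  have "(of_real \<mu> + y * x) * (1 - y * W * x)
      = of_real \<mu> + y * x - y * ((of_real \<mu> + x * y) * W) * x"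
    by (simp add: algebra_simps of_real_mult_commute)
  then have "(of_real \<mu> + y * x) * (1 - y * W * x) = of_real \<mu>"
    using assms(2) by (simp add: W_def inverse_elem_right)
  then have "(of_real \<mu> + y * x) * Z = 1"
    using assms(1) by (simp add: Z_def of_real_def)
  moreover have "(1 - y * W * x) * (of_real \<mu> + y * x)
      = of_real \<mu> + y * x - y * (W * (of_real \<mu> + x * y)) * x"
    by (simp add: algebra_simps of_real_mult_commute)
  then have "(1 - y * W * x) * (of_real \<mu> + y * x) = of_real \<mu>"
    using assms(2) by (simp add: W_def inverse_elem_left)
  then have "Z * (of_real \<mu> + y * x) = 1"
    using assms(1) by (simp add: Z_def of_real_def)
  ultimately show ?thesis by (rule invertible_elemI)
qed

lemma summable_norm_power:
  fixes x :: "'a::real_normed_algebra_1"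
  assumes "norm x < 1"
  shows "summable (\<lambda>n. norm (x ^ n))"
  by (rule summable_comparison_test'[OF summable_geometric[of "norm x"], where N=0])
    (simp_all add: assms norm_power_ineq)

lemma neumann_series:
  fixes x :: "'a::{real_normed_algebra_1,banach}"
  assumes "norm x < 1"
  shows "invertible_elem (1 - x)" and "inverse_elem (1 - x) = (\<Sum>n. x ^ n)"
proof -
  define S where "S = (\<Sum>n. x ^ n)"
  have S: "(\<lambda>n. x ^ n) sums S"
    unfolding S_def by (rule summable_sums[OF summable_norm_cancel[OF summable_norm_power[OF assms]]])
  have tel: "(\<lambda>n. x ^ n - x ^ Suc n) sums 1"
    using telescope_sums'[OF LIMSEQ_power_zero[OF assms]] by simp
  have "(\<lambda>n. (1 - x) * x ^ n) sums ((1 - x) * S)" by (rule sums_mult[OF S])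
  moreover have "(\<lambda>n. (1 - x) * x ^ n) = (\<lambda>n. x ^ n - x ^ Suc n)"
    by (simp add: left_diff_distrib)
  ultimately have right: "(1 - x) * S = 1" using sums_unique2[OF _ tel] by simp
  have "(\<lambda>n. x ^ n * (1 - x)) sums (S * (1 - x))" by (rule sums_mult2[OF S])
  moreover have "(\<lambda>n. x ^ n * (1 - x)) = (\<lambda>n. x ^ n - x ^ Suc n)"
    by (simp add: right_diff_distrib power_commutes)
  ultimately have left: "S * (1 - x) = 1" using sums_unique2[OF _ tel] by simp
  show "invertible_elem (1 - x)" by (rule invertible_elemI[OF right left])
  show "inverse_elem (1 - x) = S" by (rule inverse_elem_eq[OF right left])
qed

lemma norm_inverse_elem_one_minus_le:
  fixes x :: "'a::{real_normed_algebra_1,banach}"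
  assumes "norm x < 1"
  shows "norm (inverse_elem (1 - x)) \<le> 1 / (1 - norm x)"
proof -
  note summable = summable_norm_power[OF assms]
  have "norm (inverse_elem (1 - x)) \<le> (\<Sum>n. norm (x ^ n))"
    unfolding neumann_series(2)[OF assms] by (rule summable_norm[OF summable])
  also have "\<dots> \<le> (\<Sum>n. norm x ^ n)"
    using assms by (intro suminf_le summable summable_geometric) (simp_all add: norm_power_ineq)
  also have "\<dots> = 1 / (1 - norm x)" using assms by (simp add: suminf_geometric)
  finally show ?thesis .
qed

lemma invertible_elem_perturb:
  fixes a c :: "'a::{real_normed_algebra_1,banach}"
  assumes a: "invertible_elem a" and small: "norm c * norm (inverse_elem a) < 1"
  shows "invertible_elem (a - c)"
    and "norm (inverse_elem (a - c)) \<le> norm (inverse_elem a) / (1 - norm c * norm (inverse_elem a))"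
proof -
  let ?b = "inverse_elem a"
  have bc: "norm (?b * c) \<le> norm c * norm ?b" by (metis norm_mult_ineq mult.commute)
  then have lt: "norm (?b * c) < 1" using small by linarith
  have eq: "a - c = a * (1 - ?b * c)"
    by (simp add: right_diff_distrib inverse_elem_right[OF a] flip: mult.assoc)
  show "invertible_elem (a - c)"
    unfolding eq by (rule invertible_elem_mult(1)[OF a neumann_series(1)[OF lt]])
  have "norm (inverse_elem (a - c)) \<le> norm (inverse_elem (1 - ?b * c)) * norm ?b"
    unfolding eq invertible_elem_mult(2)[OF a neumann_series(1)[OF lt]] by (rule norm_mult_ineq)
  also have "\<dots> \<le> 1 / (1 - norm (?b * c)) * norm ?b"
    by (intro mult_right_mono norm_inverse_elem_one_minus_le lt) simp
  also have "\<dots> \<le> 1 / (1 - norm c * norm ?b) * norm ?b"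
    using small bc by (intro mult_right_mono divide_left_mono) auto
  finally show "norm (inverse_elem (a - c)) \<le> norm ?b / (1 - norm c * norm ?b)" by simp
qed

lemma tendsto_inverse_elem:
  fixes f :: "'b \<Rightarrow> 'a::{real_normed_algebra_1,banach}"
  assumes f: "(f \<longlongrightarrow> a) F" and a: "invertible_elem a"
  shows "((\<lambda>x. inverse_elem (f x)) \<longlongrightarrow> inverse_elem a) F"
proof (rule LIM_zero_cancel, rule Lim_null_comparison)
  define N where "N = norm (inverse_elem a)"
  have "N \<ge> 0" by (simp add: N_def)
  then have "\<forall>\<^sub>F x in F. dist (f x) a < 1 / (2 * (N + 1))"
    by (intro tendstoD[OF f]) simp
  then show "\<forall>\<^sub>F x in F. norm (inverse_elem (f x) - inverse_elem a) \<le> 2 * N * N * norm (f x - a)"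
  proof eventually_elim
    case (elim x)
    define c where "c = a - f x"
    have "norm c * N \<le> 1 / (2 * (N + 1)) * N"
      using elim by (intro mult_right_mono) (simp_all add: c_def N_def dist_norm norm_minus_commute)
    also have "\<dots> \<le> 1 / 2" using \<open>N \<ge> 0\<close> by (simp add: field_simps)
    finally have small: "norm c * N \<le> 1 / 2" .
    have fx: "f x = a - c" by (simp add: c_def)
    have inv: "invertible_elem (f x)"
      unfolding fx using small by (intro invertible_elem_perturb(1)[OF a]) (simp add: N_def)
    have "norm (inverse_elem (f x)) \<le> N / (1 - norm c * N)"
      unfolding fx N_def using small by (intro invertible_elem_perturb(2)[OF a]) (simp add: N_def)
    also have "\<dots> \<le> N / (1 / 2)" using small \<open>N \<ge> 0\<close> by (intro divide_left_mono) auto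
    finally have bound: "norm (inverse_elem (f x)) \<le> 2 * N" by simp
    have "norm (inverse_elem (f x) - inverse_elem a) \<le> norm (inverse_elem (f x)) * norm c * N"
      unfolding inverse_elem_diff[OF inv a] N_def c_def
      by (meson mult_right_mono norm_ge_zero norm_mult_ineq order_trans)
    also have "\<dots> \<le> 2 * N * norm c * N"
      using bound by (intro mult_right_mono) (simp_all add: N_def)
    finally show ?case by (simp add: c_def norm_minus_commute mult_ac)
  qed
  show "((\<lambda>x. 2 * N * N * norm (f x - a)) \<longlongrightarrow> 0) F"
    using tendsto_mult_right_zero[OF tendsto_norm_zero[OF LIM_zero[OF f]]] .
qed

lemma invertible_elem_of_real_minus:
  fixes y :: "'a::{real_normed_algebra_1,banach}"
  assumes "norm y < r"
  shows "invertible_elem (of_real r - y)"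
proof -
  have r: "r > 0" using assms norm_ge_zero[of y] by linarith
  then have "norm (scaleR (1 / r) y) < 1" using assms by (simp add: divide_less_eq)
  then have "invertible_elem (of_real r * (1 - scaleR (1 / r) y))"
    using r by (intro invertible_elem_mult(1) invertible_elem_of_real neumann_series(1)) simp_all
  then show ?thesis
    using r by (simp add: right_diff_distrib scaleR_conv_of_real flip: mult.assoc of_real_mult)
qed

lemma invertible_elem_of_complex_minus:
  fixes y :: "'a::cstar_algebra"
  assumes "norm y < cmod z"
  shows "invertible_elem (of_complex z - y)"
proof -
  have z: "z \<noteq> 0" using assms norm_ge_zero[of y] by auto
  have "norm (of_complex (1 / z) * y) < 1"
    using assms z by (simp add: norm_of_complex_mult norm_divide divide_less_eq)
  then have "invertible_elem (of_complex z * (1 - of_complex (1 / z) * y))"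
    by (intro invertible_elem_mult(1) invertible_elem_of_complex z neumann_series(1))
  moreover have "of_complex z * of_complex (1 / z) = (1 :: 'a)"
    using z by (simp flip: of_complex_mult)
  ultimately show ?thesis by (simp add: right_diff_distrib flip: mult.assoc)
qed

section \<open>The spectrum of a hermitian element is real\<close>

lemma norm_hermitian_add_imaginary:
  fixes w :: "'a::cstar_algebra"
  assumes "hermitian w"
  shows "(norm (w + of_complex (\<i> * t)))\<^sup>2 \<le> (norm w)\<^sup>2 + t\<^sup>2"
proof -
  let ?y = "w + of_complex (\<i> * t)"
  have "cstar ?y * ?y = w * w + of_real (t\<^sup>2)"
    using cstar_mult_add_imaginary[OF assms hermitian_1, of t] by (simp add: of_real_def)
  then have "(norm ?y)\<^sup>2 = norm (w * w + of_real (t\<^sup>2))"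
    by (simp add: power2_eq_square flip: cstar_identity)
  also have "\<dots> \<le> norm (w * w) + norm (of_real (t\<^sup>2) :: 'a)"
    by (rule norm_triangle_ineq)
  also have "norm (of_real (t\<^sup>2) :: 'a) = t\<^sup>2"
    by (simp only: norm_of_real abs_power2)
  finally show ?thesis
    using norm_hermitian_square[OF assms] by (simp add: power2_eq_square)
qed

lemma invertible_hermitian_minus_nonreal:
  fixes h :: "'a::cstar_algebra"
  assumes h: "hermitian h" and z: "Im z \<noteq> 0"
  shows "invertible_elem (h - of_complex z)"
proof -
  define b where "b = Im z"
  define w where "w = h - of_real (Re z)"
  define t where "t = ((norm w)\<^sup>2 + 1) / (2 * b)"
  have bt: "2 * b * t = (norm w)\<^sup>2 + 1" using z by (simp add: t_def b_def)
  have "(norm (w + of_complex (\<i> * t)))\<^sup>2 \<le> (norm w)\<^sup>2 + t\<^sup>2"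
    using h by (intro norm_hermitian_add_imaginary) (simp add: w_def hermitian_diff)
  also have "\<dots> < (b + t)\<^sup>2"
    using bt by (simp add: power2_eq_square algebra_simps add_pos_nonneg)
  finally have "(norm (w + of_complex (\<i> * t)))\<^sup>2 < (b + t)\<^sup>2" .
  then have "norm (w + of_complex (\<i> * t)) < \<bar>b + t\<bar>"
    by (metis abs_ge_zero power2_abs power2_less_imp_less)
  then have "norm (w + of_complex (\<i> * t)) < cmod (\<i> * complex_of_real (b + t))"
    by (simp add: norm_mult del: of_real_add)
  then have "invertible_elem (- (of_complex (\<i> * complex_of_real (b + t)) - (w + of_complex (\<i> * t))))"
    by (simp only: invertible_elem_minus_iff invertible_elem_of_complex_minus)
  moreover have "z = complex_of_real (Re z) + \<i> * complex_of_real b"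
    by (simp add: b_def complex_eq_iff)
  then have "of_complex z = (of_real (Re z) + of_complex (\<i> * complex_of_real b) :: 'a)"
    by (metis of_complex_add of_complex_of_real)
  moreover have "of_complex (\<i> * complex_of_real (b + t))
      = (of_complex (\<i> * complex_of_real b) + of_complex (\<i> * complex_of_real t) :: 'a)"
    by (simp add: distrib_left of_complex_add)
  ultimately show ?thesis by (simp add: w_def algebra_simps)
qed

section \<open>The norm of a hermitian element lies in its spectrum\<close>

lemma continuous_on_of_complex [continuous_intros]:
  "continuous_on S f \<Longrightarrow> continuous_on S (\<lambda>x. of_complex (f x) :: 'a::cstar_algebra)"
  by (rule bounded_linear.continuous_on[OF bounded_linear_of_complex])

lemma continuous_on_inverse_elem:
  fixes f :: "'b::topological_space \<Rightarrow> 'a::{real_normed_algebra_1,banach}"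
  assumes "continuous_on S f" and "\<And>x. x \<in> S \<Longrightarrow> invertible_elem (f x)"
  shows "continuous_on S (\<lambda>x. inverse_elem (f x))"
  using assms by (auto simp: continuous_on_def intro: tendsto_inverse_elem)

lemma norm_le_inverse_elem_one_minus:
  fixes x :: "'a::real_normed_algebra_1"
  assumes "invertible_elem (1 - x)"
  shows "norm x \<le> norm (inverse_elem (1 - x) - 1) * (1 + norm x)"
proof -
  have "x = (inverse_elem (1 - x) - 1) * (1 - x)"
    using inverse_elem_left[OF assms] by (simp add: left_diff_distrib)
  then have "norm x \<le> norm (inverse_elem (1 - x) - 1) * norm (1 - x)"
    by (metis norm_mult_ineq)
  also have "\<dots> \<le> norm (inverse_elem (1 - x) - 1) * (1 + norm x)"
    using norm_triangle_ineq4[of 1 x] by (intro mult_left_mono) simp_all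
  finally show ?thesis .
qed

lemma power_of_complex_mult:
  "(of_complex c * x) ^ n = of_complex (c ^ n) * (x ^ n :: 'a::cstar_algebra)"
  by (induction n) (simp_all add: of_complex_mult mult.assoc mult_of_complex_left[of x])

lemma inverse_elem_one_minus_square:
  fixes u :: "'a::real_algebra_1"
  assumes minus: "invertible_elem (1 - u)" and plus: "invertible_elem (1 + u)"
  shows "invertible_elem (1 - u * u)"
    and "inverse_elem (1 - u * u) = inverse_elem (1 - u) * inverse_elem (1 + u)"
    and "inverse_elem (1 - u * u) = scaleR (1/2) (inverse_elem (1 - u) + inverse_elem (1 + u))"
proof -
  have factor: "1 - u * u = (1 + u) * (1 - u)" "1 - u * u = (1 - u) * (1 + u)"
    by (simp_all add: algebra_simps)
  show "invertible_elem (1 - u * u)"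
    and "inverse_elem (1 - u * u) = inverse_elem (1 - u) * inverse_elem (1 + u)"
    unfolding factor(1) using invertible_elem_mult[OF plus minus] by simp_all
  let ?A = "inverse_elem (1 - u)" and ?G = "inverse_elem (1 + u)"
  have "(1 - u * u) * ?A = 1 + u"
    by (simp add: factor(1) inverse_elem_right[OF minus] mult.assoc)
  moreover have "(1 - u * u) * ?G = 1 - u"
    by (simp add: factor(2) inverse_elem_right[OF plus] mult.assoc)
  moreover have "?A * (1 - u * u) = 1 + u"
    by (simp add: factor(2) inverse_elem_left[OF minus] flip: mult.assoc)
  moreover have "?G * (1 - u * u) = 1 - u"
    by (simp add: factor(1) inverse_elem_left[OF plus] flip: mult.assoc)
  ultimately show "inverse_elem (1 - u * u) = scaleR (1/2) (?A + ?G)"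
    by (intro inverse_elem_eq)
      (simp_all add: distrib_left distrib_right scaleR_right.add[symmetric] scaleR_2[symmetric]
        del: scaleR_right.add)
qed

lemma norm_diff_square_le_of_average_eq_product:
  fixes A G :: "'a::real_normed_algebra_1"
  assumes avg: "scaleR (1/2) (A + G) = A * G" and "norm A \<le> M" and "norm (A - G) \<le> \<epsilon>"
  shows "norm (A - A * A) \<le> (1/2 + M) * \<epsilon>"
proof -
  have half: "scaleR (1/2) A + scaleR (1/2) A = A"
    by (simp flip: scaleR_add_left)
  have "A * (G - A) = scaleR (1/2) (A + G) - A * A"
    by (simp add: right_diff_distrib avg)
  then have "A - A * A = scaleR (1/2) (A - G) + A * (G - A)"
    using half by (simp add: algebra_simps)
  then have "norm (A - A * A) \<le> norm (scaleR (1/2) (A - G)) + norm (A * (G - A))"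
    by (metis norm_triangle_ineq)
  also have "\<dots> \<le> 1/2 * norm (A - G) + norm A * norm (G - A)"
    by (simp add: norm_mult_ineq)
  also have "\<dots> \<le> 1/2 * \<epsilon> + M * \<epsilon>"
    using assms(2,3) order_trans[OF norm_ge_zero assms(2)]
    by (intro add_mono mult_mono) (auto simp: norm_minus_commute)
  finally show ?thesis by (simp add: algebra_simps)
qed

lemma bound_of_le_square_add:
  fixes s :: "real \<Rightarrow> real"
  assumes cont: "continuous_on {0..1} s" and s0: "s 0 < 1/2"
    and nonneg: "\<And>t. t \<in> {0..1} \<Longrightarrow> 0 \<le> s t"
    and quadratic: "\<And>t. t \<in> {0..1} \<Longrightarrow> s t \<le> (s t)\<^sup>2 + \<eta>"
    and \<eta>: "\<eta> < 1/4"
  shows "s 1 \<le> 2 * \<eta>"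
proof (cases "s 1 \<le> 1/2")
  case True
  have "(s 1)\<^sup>2 \<le> s 1 * (1/2)"
    unfolding power2_eq_square using True nonneg[of 1] by (intro mult_left_mono) auto
  then show ?thesis using quadratic[of 1] by simp
next
  case False
  then obtain t where t: "t \<in> {0..1}" and st: "s t = 1/2"
    using IVT'[of s 0 "1/2" 1] cont s0 by force
  have "1/2 \<le> (1/2)\<^sup>2 + \<eta>" by (metis st quadratic[OF t])
  then show ?thesis using \<eta> by (simp add: power2_eq_square)
qed

definition neg_one_root :: "nat \<Rightarrow> complex" where
  "neg_one_root k = cis (pi / 2 ^ k)"

lemma neg_one_root_power: "neg_one_root k ^ 2 ^ k = -1"
  unfolding neg_one_root_def Complex.DeMoivre by simp

lemma norm_neg_one_root [simp]: "cmod (neg_one_root k) = 1"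
  by (simp add: neg_one_root_def)

lemma neg_one_root_tendsto: "neg_one_root \<longlonglongrightarrow> 1"
  unfolding neg_one_root_def using tendsto_cis[OF LIMSEQ_divide_realpow_zero[of 2 pi]] by simp

definition power_resolvent :: "'a::cstar_algebra \<Rightarrow> nat \<Rightarrow> complex \<Rightarrow> 'a" where
  "power_resolvent h k l = inverse_elem (1 - (of_complex l * h) ^ 2 ^ k)"

lemma power_resolvent_Suc:
  fixes h :: "'a::cstar_algebra"
  assumes "invertible_elem (1 - (of_complex l * h) ^ 2 ^ k)"
    and "invertible_elem (1 - (of_complex (l * neg_one_root k) * h) ^ 2 ^ k)"
  shows "invertible_elem (1 - (of_complex l * h) ^ 2 ^ Suc k)"
    and "power_resolvent h (Suc k) l
      = power_resolvent h k l * power_resolvent h k (l * neg_one_root k)"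
    and "power_resolvent h (Suc k) l
      = scaleR (1/2) (power_resolvent h k l + power_resolvent h k (l * neg_one_root k))"
proof -
  let ?u = "(of_complex l * h) ^ 2 ^ k"
  have rotate: "(of_complex (l * neg_one_root k) * h) ^ 2 ^ k = - ?u"
    by (simp add: power_of_complex_mult power_mult_distrib neg_one_root_power of_complex_minus)
  have square: "(of_complex l * h) ^ 2 ^ Suc k = ?u * ?u"
    by (simp add: power_add[symmetric] mult_2)
  show "invertible_elem (1 - (of_complex l * h) ^ 2 ^ Suc k)"
    and "power_resolvent h (Suc k) l
      = power_resolvent h k l * power_resolvent h k (l * neg_one_root k)"
    and "power_resolvent h (Suc k) l
      = scaleR (1/2) (power_resolvent h k l + power_resolvent h k (l * neg_one_root k))"
    using inverse_elem_one_minus_square[of ?u] assms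
    unfolding power_resolvent_def rotate square by simp_all
qed

context
  fixes h :: "'a::cstar_algebra" and M :: real
  assumes resolvent_invertible: "\<And>l. cmod l \<le> 1 \<Longrightarrow> invertible_elem (1 - of_complex l * h)"
    and resolvent_bounded: "\<And>l. cmod l \<le> 1 \<Longrightarrow> norm (inverse_elem (1 - of_complex l * h)) \<le> M"
begin

lemma power_resolvent_invertible_bounded:
  "cmod l \<le> 1 \<Longrightarrow>
    invertible_elem (1 - (of_complex l * h) ^ 2 ^ k) \<and> norm (power_resolvent h k l) \<le> M"
proof (induction k arbitrary: l)
  case 0
  then show ?case using resolvent_invertible resolvent_bounded by (simp add: power_resolvent_def)
next
  case (Suc k)
  have "cmod (l * neg_one_root k) \<le> 1" using Suc.prems by (simp add: norm_mult)
  then have inv: "invertible_elem (1 - (of_complex l * h) ^ 2 ^ k)"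
      "invertible_elem (1 - (of_complex (l * neg_one_root k) * h) ^ 2 ^ k)"
    and bounded: "norm (power_resolvent h k l) \<le> M"
      "norm (power_resolvent h k (l * neg_one_root k)) \<le> M"
    using Suc.IH Suc.prems by blast+
  have "norm (power_resolvent h (Suc k) l) \<le> 1/2 * (M + M)"
    unfolding power_resolvent_Suc(3)[OF inv]
    using norm_triangle_ineq[of "power_resolvent h k l" "power_resolvent h k (l * neg_one_root k)"]
      bounded by simp
  then show ?case using power_resolvent_Suc(1)[OF inv] by simp
qed

lemma power_resolvent_rotate:
  assumes \<alpha>: "cmod \<alpha> = 1"
    and \<epsilon>: "\<And>l. cmod l \<le> 1 \<Longrightarrow>
      norm (inverse_elem (1 - of_complex l * h) - inverse_elem (1 - of_complex (l * \<alpha>) * h)) \<le> \<epsilon>"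
  shows "cmod l \<le> 1 \<Longrightarrow> norm (power_resolvent h k l - power_resolvent h k (l * \<alpha>)) \<le> \<epsilon>"
proof (induction k arbitrary: l)
  case 0
  then show ?case using \<epsilon> by (simp add: power_resolvent_def)
next
  case (Suc k)
  let ?E = "power_resolvent h k" and ?\<zeta> = "neg_one_root k"
  have disc: "cmod (l * ?\<zeta>) \<le> 1" "cmod (l * \<alpha>) \<le> 1" "cmod (l * \<alpha> * ?\<zeta>) \<le> 1"
    using Suc.prems \<alpha> by (simp_all add: norm_mult)
  note inv = power_resolvent_invertible_bounded[THEN conjunct1]
  have "l * \<alpha> * ?\<zeta> = l * ?\<zeta> * \<alpha>" by (simp add: mult_ac)
  then have "power_resolvent h (Suc k) l - power_resolvent h (Suc k) (l * \<alpha>)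
      = scaleR (1/2) ((?E l - ?E (l * \<alpha>)) + (?E (l * ?\<zeta>) - ?E (l * ?\<zeta> * \<alpha>)))"
    unfolding power_resolvent_Suc(3)[OF inv[OF Suc.prems] inv[OF disc(1)]]
      power_resolvent_Suc(3)[OF inv[OF disc(2)] inv[OF disc(3)]]
    by (simp add: algebra_simps)
  also have "norm \<dots> \<le> 1/2 * (norm (?E l - ?E (l * \<alpha>)) + norm (?E (l * ?\<zeta>) - ?E (l * ?\<zeta> * \<alpha>)))"
    using norm_triangle_ineq by simp
  also have "\<dots> \<le> \<epsilon>" using Suc.IH[OF Suc.prems] Suc.IH[OF disc(1)] by simp
  finally show ?case .
qed

text \<open>\<open>E = power_resolvent h k t\<close> is nearly idempotent, so \<open>s t = \<parallel>E - 1\<parallel>\<close> satisfies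
  \<open>s \<le> s\<^sup>2 + \<eta>\<close>; starting from \<open>s 0 = 0\<close>, continuity keeps it below \<open>2 \<eta>\<close> on \<open>[0, 1]\<close>.\<close>
lemma power_resolvent_one_near_one:
  assumes rotate: "\<And>l. cmod l \<le> 1 \<Longrightarrow>
      norm (power_resolvent h k l - power_resolvent h k (l * neg_one_root k)) \<le> \<epsilon>"
    and small: "(1/2 + M) * \<epsilon> < 1/4"
  shows "norm (power_resolvent h k 1 - 1) \<le> 2 * ((1/2 + M) * \<epsilon>)"
proof -
  define s where "s t = norm (power_resolvent h k (complex_of_real t) - 1)" for t
  have disc: "cmod (complex_of_real t) \<le> 1" if "t \<in> {0..1}" for t
    using that by simp
  note E = power_resolvent_invertible_bounded[OF disc]
  have "continuous_on {0..1} s"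
    unfolding s_def power_resolvent_def
    by (intro continuous_intros continuous_on_inverse_elem) (use E in blast)
  moreover have "s 0 = 0"
    unfolding s_def power_resolvent_def using inverse_elem_eq[of 1 1] by (simp add: power_0_left)
  moreover have "s t \<le> (s t)\<^sup>2 + (1/2 + M) * \<epsilon>" if t: "t \<in> {0..1}" for t
  proof -
    let ?A = "power_resolvent h k (complex_of_real t)"
    have "scaleR (1/2) (?A + power_resolvent h k (complex_of_real t * neg_one_root k))
        = ?A * power_resolvent h k (complex_of_real t * neg_one_root k)"
      using power_resolvent_Suc(2,3)[of _ h k] E[OF t]
        power_resolvent_invertible_bounded[of "complex_of_real t * neg_one_root k"] disc[OF t]
      by (simp add: norm_mult)
    then have "norm (?A - ?A * ?A) \<le> (1/2 + M) * \<epsilon>"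
      using E[OF t] rotate[OF disc[OF t]] by (intro norm_diff_square_le_of_average_eq_product) auto
    moreover have "1 - ?A = (1 - ?A) * (1 - ?A) + (?A - ?A * ?A)" by (simp add: algebra_simps)
    then have "norm (1 - ?A) \<le> norm ((1 - ?A) * (1 - ?A)) + norm (?A - ?A * ?A)"
      by (metis norm_triangle_ineq)
    then have "norm (1 - ?A) \<le> norm (1 - ?A) * norm (1 - ?A) + norm (?A - ?A * ?A)"
      using norm_mult_ineq[of "1 - ?A" "1 - ?A"] by linarith
    ultimately show ?thesis by (simp add: s_def power2_eq_square norm_minus_commute)
  qed
  ultimately have "s 1 \<le> 2 * ((1/2 + M) * \<epsilon>)"
    using small by (intro bound_of_le_square_add) (auto simp: s_def)
  then show ?thesis by (simp add: s_def)
qed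

end

lemma invertible_one_minus_of_complex_mult:
  fixes h :: "'a::cstar_algebra"
  assumes h: "hermitian h" and n: "norm h \<le> 1"
    and minus: "invertible_elem (1 - h)" and plus: "invertible_elem (1 + h)"
    and l: "cmod l \<le> 1"
  shows "invertible_elem (1 - of_complex l * h)"
proof (cases "cmod l < 1")
  case True
  then have "norm (of_complex l * h) < 1"
    using n by (simp add: norm_of_complex_mult) (meson le_less_trans mult_left_le norm_ge_zero)
  then show ?thesis by (rule neumann_series(1))
next
  case False
  then have l1: "cmod l = 1" using l by simp
  show ?thesis
  proof (cases "Im l = 0")
    case True
    then have "\<bar>Re l\<bar> = 1" using l1 by (simp add: cmod_def)
    then have "Re l = 1 \<or> Re l = -1" by arith
    then have "l = 1 \<or> l = -1" using True by (auto simp: complex_eq_iff)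
    then show ?thesis using minus plus by (auto simp: of_complex_minus)
  next
    case False
    have "of_complex l * of_complex (cnj l) = (1 :: 'a)"
      using l1 by (simp add: complex_norm_square[symmetric] flip: of_complex_mult)
    then have "1 - of_complex l * h = - (of_complex l * (h - of_complex (cnj l)))"
      by (simp add: right_diff_distrib)
    moreover have "invertible_elem (of_complex l * (h - of_complex (cnj l)))"
      using False l1
      by (intro invertible_elem_mult(1) invertible_elem_of_complex
          invertible_hermitian_minus_nonreal[OF h]) auto
    ultimately show ?thesis by (simp add: invertible_elem_minus_iff)
  qed
qed

lemma uniformly_close_under_neg_one_root:
  fixes f :: "complex \<Rightarrow> 'a::real_normed_vector"
  assumes "continuous_on (cball 0 1) f" and "\<epsilon> > 0"
  obtains k where "\<And>l. cmod l \<le> 1 \<Longrightarrow> norm (f l - f (l * neg_one_root k)) \<le> \<epsilon>"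
proof -
  have "uniformly_continuous_on (cball 0 1) f"
    by (rule compact_uniformly_continuous[OF assms(1) compact_cball])
  then obtain \<delta> where "\<delta> > 0"
    and \<delta>: "\<forall>x\<in>cball 0 1. \<forall>y\<in>cball 0 1. dist y x < \<delta> \<longrightarrow> dist (f y) (f x) < \<epsilon>"
    using assms(2) unfolding uniformly_continuous_on_def by blast
  obtain k where k: "cmod (neg_one_root k - 1) < \<delta>"
    using LIMSEQ_D[OF neg_one_root_tendsto \<open>\<delta> > 0\<close>] by blast
  have "norm (f l - f (l * neg_one_root k)) \<le> \<epsilon>" if "cmod l \<le> 1" for l
  proof -
    have "dist (l * neg_one_root k) l = cmod l * cmod (neg_one_root k - 1)"
      by (simp add: dist_norm right_diff_distrib flip: norm_mult)
    also have "\<dots> < \<delta>" using that k by (meson le_less_trans mult_left_le_one_le norm_ge_zero)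
    finally show ?thesis
      using \<delta> that by (force simp: dist_norm norm_mult norm_minus_commute)
  qed
  then show thesis by (rule that)
qed

lemma hermitian_unit_norm_in_spectrum:
  fixes h :: "'a::cstar_algebra"
  assumes h: "hermitian h" and n: "norm h = 1"
  shows "\<not> (invertible_elem (1 - h) \<and> invertible_elem (1 + h))"
proof
  assume "invertible_elem (1 - h) \<and> invertible_elem (1 + h)"
  then have inv: "\<And>l. cmod l \<le> 1 \<Longrightarrow> invertible_elem (1 - of_complex l * h)"
    using invertible_one_minus_of_complex_mult[OF h] n by simp
  define R where "R l = inverse_elem (1 - of_complex l * h)" for l
  have cont: "continuous_on (cball 0 1) R"
    unfolding R_def by (intro continuous_on_inverse_elem continuous_intros) (simp add: inv)
  obtain M where M: "\<And>l. cmod l \<le> 1 \<Longrightarrow> norm (R l) \<le> M"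
    using compact_imp_bounded[OF compact_continuous_image[OF cont compact_cball]]
    by (fastforce simp: bounded_iff mem_cball_0)
  have "M \<ge> 0" using order_trans[OF norm_ge_zero M[of 0]] by simp
  define \<epsilon> where "\<epsilon> = 1 / (4 * M + 4)"
  have \<epsilon>: "\<epsilon> > 0" "(1/2 + M) * \<epsilon> < 1/4"
    using \<open>M \<ge> 0\<close> by (simp_all add: \<epsilon>_def field_simps)
  obtain k where "\<And>l. cmod l \<le> 1 \<Longrightarrow> norm (R l - R (l * neg_one_root k)) \<le> \<epsilon>"
    using uniformly_close_under_neg_one_root[OF cont \<epsilon>(1)] by blast
  then have "norm (power_resolvent h k l - power_resolvent h k (l * neg_one_root k)) \<le> \<epsilon>"
    if "cmod l \<le> 1" for l
    using power_resolvent_rotate[OF inv M[unfolded R_def] norm_neg_one_root _ that]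
    by (simp add: R_def)
  then have "norm (power_resolvent h k 1 - 1) \<le> 2 * ((1/2 + M) * \<epsilon>)"
    using power_resolvent_one_near_one[OF inv M[unfolded R_def] _ \<epsilon>(2)] by blast
  moreover have "invertible_elem (1 - h ^ 2 ^ k)"
    using power_resolvent_invertible_bounded[OF inv M[unfolded R_def], of 1 k] by simp
  moreover have "norm (h ^ 2 ^ k) = 1" using norm_hermitian_power2[OF h] n by simp
  ultimately show False
    using norm_le_inverse_elem_one_minus[of "h ^ 2 ^ k"] \<epsilon>(2) by (simp add: power_resolvent_def)
qed

lemma hermitian_norm_in_spectrum:
  fixes h :: "'a::cstar_algebra"
  assumes "hermitian h"
  shows "\<not> (invertible_elem (of_real (norm h) - h) \<and> invertible_elem (of_real (norm h) + h))"
proof (cases "h = 0")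
  case True
  then show ?thesis by (simp add: invertible_elem_def)
next
  case False
  define g where "g = scaleR (1 / norm h) h"
  have g: "hermitian g" "norm g = 1"
    using assms False by (simp_all add: g_def hermitian_scaleR)
  have "scaleR (1 / norm h) (of_real (norm h) - h) = 1 - g"
    and "scaleR (1 / norm h) (of_real (norm h) + h) = 1 + g"
    using False by (simp_all add: g_def scaleR_diff_right scaleR_add_right of_real_def)
  moreover have "1 / norm h \<noteq> 0" using False by simp
  ultimately show ?thesis
    using hermitian_unit_norm_in_spectrum[OF g] invertible_elem_scaleR[of "1 / norm h"] by metis
qed

section \<open>Square roots from the binomial series\<close>

definition sqrt_coeff :: "nat \<Rightarrow> real" where
  "sqrt_coeff n = ((1/2) gchoose n) * (- 1) ^ n"

lemma gchoose_neg_half_sign: "0 \<le> (- 1) ^ N * ((- (1/2::real)) gchoose N)"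
proof -
  have "(- 1) ^ N * ((- (1/2::real)) gchoose N) = (1/2 + of_nat N - 1) gchoose N"
    by (simp add: gbinomial_minus power_mult_distrib[symmetric])
  also have "\<dots> = (\<Prod>i = 0..<N. (1/2 + of_nat N - 1) - of_nat i) / fact N"
    using gbinomial_mult_fact'[of "1/2 + of_nat N - 1 :: real" N] by (simp add: eq_divide_eq)
  also have "\<dots> \<ge> 0" by (intro divide_nonneg_pos prod_nonneg) auto
  finally show ?thesis .
qed

lemma sum_sqrt_coeff: "(\<Sum>n\<le>N. sqrt_coeff n) = (- 1) ^ N * ((- (1/2::real)) gchoose N)"
  unfolding sqrt_coeff_def using gbinomial_sum_lower_neg[of "1/2::real" N] by simp

lemma sqrt_coeff_nonpos: "0 < n \<Longrightarrow> sqrt_coeff n \<le> 0"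
proof -
  assume n: "0 < n"
  then obtain N where N: "n = Suc N" by (cases n) auto
  have "sqrt_coeff n = - ((1/2) / of_nat n) * ((- 1) ^ N * ((- (1/2::real)) gchoose N))"
    using gbinomial_absorption'[OF n, of "1/2::real"] by (simp add: sqrt_coeff_def N)
  then show ?thesis using gchoose_neg_half_sign[of N] by (simp add: mult_nonneg_nonneg)
qed

lemma sum_abs_sqrt_coeff_Suc_le: "(\<Sum>n<N. \<bar>sqrt_coeff (Suc n)\<bar>) \<le> 1"
proof -
  have "(\<Sum>n<N. \<bar>sqrt_coeff (Suc n)\<bar>) = - (\<Sum>n<N. sqrt_coeff (Suc n))"
    by (simp add: sqrt_coeff_nonpos abs_of_nonpos flip: sum_negf)
  also have "(\<Sum>n<N. sqrt_coeff (Suc n)) = (\<Sum>n\<le>N. sqrt_coeff n) - 1"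
    by (simp add: sum.atMost_shift lessThan_Suc_atMost sqrt_coeff_def)
  finally show ?thesis using sum_sqrt_coeff[of N] gchoose_neg_half_sign[of N] by simp
qed

lemma summable_abs_sqrt_coeff_Suc: "summable (\<lambda>n. \<bar>sqrt_coeff (Suc n)\<bar>)"
  by (rule summableI_nonneg_bounded[where x=1]) (auto intro: sum_abs_sqrt_coeff_Suc_le)

lemma summable_abs_sqrt_coeff: "summable (\<lambda>n. \<bar>sqrt_coeff n\<bar>)"
  using summable_abs_sqrt_coeff_Suc summable_Suc_iff[where f="\<lambda>n. \<bar>sqrt_coeff n\<bar>"] by simp

lemma sqrt_coeff_convolution:
  "(\<Sum>i\<le>k. sqrt_coeff i * sqrt_coeff (k - i)) = (if k = 0 then 1 else if k = 1 then -1 else 0)"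
proof -
  have "(\<Sum>i\<le>k. sqrt_coeff i * sqrt_coeff (k - i))
      = (\<Sum>i\<le>k. ((1/2::real) gchoose i) * ((1/2) gchoose (k - i))) * (- 1) ^ k"
    unfolding sqrt_coeff_def sum_distrib_right
    by (intro sum.cong refl) (simp add: mult_ac flip: power_add)
  also have "(\<Sum>i\<le>k. ((1/2::real) gchoose i) * ((1/2) gchoose (k - i))) = of_nat (1 choose k)"
    using gbinomial_Vandermonde[of "1/2::real" "1/2" k] binomial_gbinomial[of 1 k, where 'a=real]
    by (simp add: atLeast0AtMost)
  finally show ?thesis by (cases k) (auto simp: binomial_eq_0)
qed

definition sqrt_one_minus :: "'a::{real_normed_algebra_1,banach} \<Rightarrow> 'a" where
  "sqrt_one_minus z = (\<Sum>n. scaleR (sqrt_coeff n) (z ^ n))"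

context
  fixes z :: "'a::{real_normed_algebra_1,banach}"
  assumes z: "norm z \<le> 1"
begin

lemma norm_sqrt_one_minus_term_le: "norm (scaleR (sqrt_coeff n) (z ^ n)) \<le> \<bar>sqrt_coeff n\<bar>"
proof -
  have "norm (z ^ n) \<le> 1"
    using norm_power_ineq[of z n] power_le_one[OF norm_ge_zero z, of n] by linarith
  then show ?thesis by (simp add: mult_left_le)
qed

lemma summable_norm_sqrt_one_minus: "summable (\<lambda>n. norm (scaleR (sqrt_coeff n) (z ^ n)))"
  by (rule summable_comparison_test'[OF summable_abs_sqrt_coeff, where N=0])
    (use norm_sqrt_one_minus_term_le in simp)

lemma summable_sqrt_one_minus: "summable (\<lambda>n. scaleR (sqrt_coeff n) (z ^ n))"
  by (rule summable_norm_cancel[OF summable_norm_sqrt_one_minus])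

lemma sqrt_one_minus_square: "sqrt_one_minus z * sqrt_one_minus z = 1 - z"
proof -
  have "sqrt_one_minus z * sqrt_one_minus z
      = (\<Sum>k. \<Sum>i\<le>k. scaleR (sqrt_coeff i) (z ^ i) * scaleR (sqrt_coeff (k - i)) (z ^ (k - i)))"
    unfolding sqrt_one_minus_def
    by (rule Cauchy_product[OF summable_norm_sqrt_one_minus summable_norm_sqrt_one_minus])
  also have "\<dots> = (\<Sum>k. scaleR (if k = 0 then 1 else if k = 1 then -1 else 0) (z ^ k))"
  proof (intro arg_cong[where f=suminf] ext)
    fix k
    have "(\<Sum>i\<le>k. scaleR (sqrt_coeff i) (z ^ i) * scaleR (sqrt_coeff (k - i)) (z ^ (k - i)))
        = (\<Sum>i\<le>k. scaleR (sqrt_coeff i * sqrt_coeff (k - i)) (z ^ k))"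
      by (intro sum.cong refl) (simp flip: power_add)
    then show "(\<Sum>i\<le>k. scaleR (sqrt_coeff i) (z ^ i) * scaleR (sqrt_coeff (k - i)) (z ^ (k - i)))
        = scaleR (if k = 0 then 1 else if k = 1 then -1 else 0) (z ^ k)"
      by (simp add: sqrt_coeff_convolution flip: scaleR_sum_left)
  qed
  also have "\<dots> = (\<Sum>k\<in>{0,1}. scaleR (if k = 0 then 1 else if k = 1 then -1 else 0) (z ^ k))"
    by (rule suminf_finite) auto
  also have "\<dots> = 1 - z" by simp
  finally show ?thesis .
qed

lemma sqrt_one_minus_commute:
  assumes "x * z = z * x"
  shows "x * sqrt_one_minus z = sqrt_one_minus z * x"
proof -
  have "x * sqrt_one_minus z = (\<Sum>n. x * scaleR (sqrt_coeff n) (z ^ n))"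
    unfolding sqrt_one_minus_def by (rule suminf_mult[OF summable_sqrt_one_minus, symmetric])
  also have "\<dots> = (\<Sum>n. scaleR (sqrt_coeff n) (z ^ n) * x)"
    using power_commuting_commutes[OF assms[symmetric]] by simp
  also have "\<dots> = sqrt_one_minus z * x"
    unfolding sqrt_one_minus_def by (rule suminf_mult2[OF summable_sqrt_one_minus, symmetric])
  finally show ?thesis .
qed

lemma norm_one_minus_sqrt_one_minus_le: "norm (1 - sqrt_one_minus z) \<le> 1"
proof -
  have summable: "summable (\<lambda>n. norm (scaleR (sqrt_coeff (Suc n)) (z ^ Suc n)))"
    using summable_norm_sqrt_one_minus
      summable_Suc_iff[where f="\<lambda>n. norm (scaleR (sqrt_coeff n) (z ^ n))"] by simp
  have "1 - sqrt_one_minus z = - (\<Sum>n. scaleR (sqrt_coeff (Suc n)) (z ^ Suc n))"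
    unfolding sqrt_one_minus_def using suminf_split_head[OF summable_sqrt_one_minus]
    by (simp add: sqrt_coeff_def)
  then have "norm (1 - sqrt_one_minus z) \<le> (\<Sum>n. norm (scaleR (sqrt_coeff (Suc n)) (z ^ Suc n)))"
    using summable_norm[OF summable] by simp
  also have "\<dots> \<le> (\<Sum>n. \<bar>sqrt_coeff (Suc n)\<bar>)"
    by (intro suminf_le summable summable_abs_sqrt_coeff_Suc norm_sqrt_one_minus_term_le)
  also have "\<dots> \<le> 1"
    by (intro suminf_le_const summable_abs_sqrt_coeff_Suc sum_abs_sqrt_coeff_Suc_le)
  finally show ?thesis .
qed

end

lemma hermitian_sqrt_one_minus:
  fixes z :: "'a::cstar_algebra"
  assumes "hermitian z" and "norm z \<le> 1"
  shows "hermitian (sqrt_one_minus z)"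
proof -
  have "cstar (sqrt_one_minus z) = (\<Sum>n. cstar (scaleR (sqrt_coeff n) (z ^ n)))"
    unfolding sqrt_one_minus_def
    by (rule bounded_linear.suminf[OF bounded_linear_cstar summable_sqrt_one_minus[OF assms(2)]])
  also have "\<dots> = sqrt_one_minus z"
    using assms(1) by (simp add: sqrt_one_minus_def cstar_scaleR cstar_power hermitian_def)
  finally show ?thesis unfolding hermitian_def .
qed

section \<open>Spectrally positive elements\<close>

definition spectrally_positive :: "'a::cstar_algebra \<Rightarrow> bool" where
  "spectrally_positive x \<longleftrightarrow> hermitian x \<and> (\<forall>\<mu>>0. invertible_elem (x + of_real \<mu>))"

lemma spectrally_positive_invertible:
  "spectrally_positive x \<Longrightarrow> \<mu> > 0 \<Longrightarrow> invertible_elem (x + of_real \<mu>)"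
  by (simp add: spectrally_positive_def)

lemma spectrally_positiveI_norm:
  fixes x :: "'a::cstar_algebra"
  assumes "hermitian x" and "norm (of_real s - x) \<le> s"
  shows "spectrally_positive x"
  unfolding spectrally_positive_def
proof (intro conjI allI impI assms(1))
  fix \<mu> :: real
  assume "\<mu> > 0"
  then have "invertible_elem (of_real (s + \<mu>) - (of_real s - x))"
    using assms(2) by (intro invertible_elem_of_real_minus) simp
  then show "invertible_elem (x + of_real \<mu>)" by (simp add: algebra_simps)
qed

lemma norm_le_of_spectrally_positive:
  fixes g :: "'a::cstar_algebra"
  assumes "hermitian g"
    and minus: "spectrally_positive (of_real s - g)" and plus: "spectrally_positive (of_real s + g)"
  shows "norm g \<le> s"
proof (rule ccontr)
  assume "\<not> norm g \<le> s"
  then have gap: "norm g - s > 0" by simp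
  have "(of_real s - g) + of_real (norm g - s) = of_real (norm g) - g"
    and "(of_real s + g) + of_real (norm g - s) = of_real (norm g) + g"
    by (simp_all add: algebra_simps)
  then show False
    using hermitian_norm_in_spectrum[OF assms(1)] spectrally_positive_invertible[OF minus gap]
      spectrally_positive_invertible[OF plus gap] by metis
qed

lemma spectrally_positive_antisym:
  fixes x :: "'a::cstar_algebra"
  assumes "spectrally_positive x" and "spectrally_positive (- x)"
  shows "x = 0"
  using norm_le_of_spectrally_positive[of x 0] assms by (simp add: spectrally_positive_def)

lemma spectrally_positive_0 [simp]: "spectrally_positive (0 :: 'a::cstar_algebra)"
  by (rule spectrally_positiveI_norm[where s=0]) (simp_all add: hermitian_def)

lemma norm_of_real_norm_minus_le:
  fixes x :: "'a::cstar_algebra"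
  assumes "spectrally_positive x"
  shows "norm (of_real (norm x) - x) \<le> norm x"
proof (rule norm_le_of_spectrally_positive)
  have x: "hermitian x" using assms by (simp add: spectrally_positive_def)
  then show "hermitian (of_real (norm x) - x)" by (simp add: hermitian_diff)
  show "spectrally_positive (of_real (norm x) - (of_real (norm x) - x))" using assms by simp
  show "spectrally_positive (of_real (norm x) + (of_real (norm x) - x))"
  proof (rule spectrally_positiveI_norm[where s="norm x + norm x"])
    show "hermitian (of_real (norm x) + (of_real (norm x) - x))"
      using x by (simp add: hermitian_add hermitian_diff)
    have eq: "of_real (norm x + norm x) - (of_real (norm x) + (of_real (norm x) - x)) = x"
      by (simp only: of_real_add add_diff_cancel_left diff_diff_eq2 add_diff_cancel_left')
    show "norm (of_real (norm x + norm x) - (of_real (norm x) + (of_real (norm x) - x)))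
        \<le> norm x + norm x"
      unfolding eq by simp
  qed
qed

lemma spectrally_positive_add:
  fixes x y :: "'a::cstar_algebra"
  assumes "spectrally_positive x" and "spectrally_positive y"
  shows "spectrally_positive (x + y)"
proof (rule spectrally_positiveI_norm[where s="norm x + norm y"])
  show "hermitian (x + y)" using assms by (simp add: spectrally_positive_def hermitian_add)
  have "norm (of_real (norm x + norm y) - (x + y))
      = norm ((of_real (norm x) - x) + (of_real (norm y) - y) :: 'a)"
    by (simp add: algebra_simps)
  also have "\<dots> \<le> norm (of_real (norm x) - x) + norm (of_real (norm y) - y :: 'a)"
    by (rule norm_triangle_ineq)
  also have "\<dots> \<le> norm x + norm y"
    using norm_of_real_norm_minus_le[OF assms(1)] norm_of_real_norm_minus_le[OF assms(2)] by simp
  finally show "norm (of_real (norm x + norm y) - (x + y)) \<le> norm x + norm y" .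
qed

lemma spectrally_positive_scaleR:
  fixes x :: "'a::cstar_algebra"
  assumes "spectrally_positive x" and "0 \<le> r"
  shows "spectrally_positive (scaleR r x)"
proof (rule spectrally_positiveI_norm[where s="r * norm x"])
  show "hermitian (scaleR r x)" using assms by (simp add: spectrally_positive_def hermitian_scaleR)
  have "of_real (r * norm x) - scaleR r x = scaleR r (of_real (norm x) - x :: 'a)"
    by (simp add: scaleR_diff_right of_real_def)
  then have "norm (of_real (r * norm x) - scaleR r x) = r * norm (of_real (norm x) - x :: 'a)"
    using assms(2) by simp
  also have "\<dots> \<le> r * norm x"
    using norm_of_real_norm_minus_le[OF assms(1)] assms(2) by (rule mult_left_mono)
  finally show "norm (of_real (r * norm x) - scaleR r x) \<le> r * norm x" .
qed

lemma spectrally_positive_square: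
  fixes h :: "'a::cstar_algebra"
  assumes h: "hermitian h"
  shows "spectrally_positive (h * h)"
  unfolding spectrally_positive_def
proof (intro conjI allI impI)
  show "hermitian (h * h)" using h by (simp add: hermitian_def cstar_mult)
  fix \<mu> :: real
  assume "\<mu> > 0"
  define c where "c = \<i> * complex_of_real (sqrt \<mu>)"
  have c: "Im c \<noteq> 0" "Im (- c) \<noteq> 0" using \<open>\<mu> > 0\<close> by (simp_all add: c_def)
  have "c * c = - complex_of_real \<mu>" using \<open>\<mu> > 0\<close> by (simp add: c_def complex_eq_iff)
  then have "of_complex c * of_complex c = (- of_real \<mu> :: 'a)"
    by (metis of_complex_minus of_complex_mult of_complex_of_real)
  then have "(h - of_complex c) * (h - of_complex (- c)) = h * h + of_real \<mu>"
    using of_complex_commute[of c h] by (simp add: of_complex_minus algebra_simps)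
  moreover have "invertible_elem ((h - of_complex c) * (h - of_complex (- c)))"
    using c by (intro invertible_elem_mult(1) invertible_hermitian_minus_nonreal h)
  ultimately show "invertible_elem (h * h + of_real \<mu>)" by simp
qed

lemma norm_one_minus_le_of_spectrally_positive:
  fixes q :: "'a::cstar_algebra"
  assumes "spectrally_positive q" and "norm q \<le> 1"
  shows "norm (1 - q) \<le> 1"
proof (rule norm_le_of_spectrally_positive)
  have q: "hermitian q" using assms(1) by (simp add: spectrally_positive_def)
  then show "hermitian (1 - q)" by (simp add: hermitian_diff)
  show "spectrally_positive (of_real 1 - (1 - q))" using assms(1) by simp
  show "spectrally_positive (of_real 1 + (1 - q))"
  proof (rule spectrally_positiveI_norm[where s="1 + 1"])
    show "hermitian (of_real 1 + (1 - q))" using q by (simp add: hermitian_add hermitian_diff)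
    have eq: "of_real (1 + 1) - (of_real 1 + (1 - q)) = q"
      by (simp only: of_real_add of_real_1 add_diff_cancel_left diff_diff_eq2 add_diff_cancel_left')
    show "norm (of_real (1 + 1) - (of_real 1 + (1 - q))) \<le> 1 + 1"
      unfolding eq using assms(2) by simp
  qed
qed

lemma spectrally_positive_sqrt:
  fixes q :: "'a::cstar_algebra"
  assumes "spectrally_positive q"
  obtains k where "hermitian k" and "k * k = q"
proof -
  define r where "r = norm q + 1"
  have r: "r > 0" by (simp add: r_def add_nonneg_pos)
  have q': "spectrally_positive (scaleR (1 / r) q)"
    using assms r by (simp add: spectrally_positive_scaleR)
  define z where "z = 1 - scaleR (1 / r) q"
  have "norm (scaleR (1 / r) q) \<le> 1" using r by (simp add: r_def divide_le_eq)
  then have z: "norm z \<le> 1"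
    unfolding z_def by (rule norm_one_minus_le_of_spectrally_positive[OF q'])
  have "hermitian z" using q' by (simp add: z_def spectrally_positive_def hermitian_diff)
  show thesis
  proof (rule that)
    show "hermitian (scaleR (sqrt r) (sqrt_one_minus z))"
      by (simp add: hermitian_scaleR hermitian_sqrt_one_minus[OF \<open>hermitian z\<close> z])
    have "scaleR (sqrt r) (sqrt_one_minus z) * scaleR (sqrt r) (sqrt_one_minus z)
        = scaleR (sqrt r * sqrt r) (1 - z)"
      by (simp add: sqrt_one_minus_square[OF z])
    also have "\<dots> = q" using r by (simp add: z_def)
    finally show "scaleR (sqrt r) (sqrt_one_minus z) * scaleR (sqrt r) (sqrt_one_minus z) = q" .
  qed
qed

lemma hermitian_abs:
  fixes h :: "'a::cstar_algebra"
  assumes h: "hermitian h" and "norm h \<le> 1"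
  obtains a where "spectrally_positive a" and "a * a = h * h" and "a * h = h * a"
proof -
  have hh: "spectrally_positive (h * h)" by (rule spectrally_positive_square[OF h])
  have "norm (h * h) \<le> 1"
    using norm_hermitian_square[OF h] assms(2) by (simp add: mult_le_one)
  define z where "z = 1 - h * h"
  have z: "norm z \<le> 1"
    unfolding z_def by (rule norm_one_minus_le_of_spectrally_positive[OF hh \<open>norm (h * h) \<le> 1\<close>])
  have "hermitian z" using hh by (simp add: z_def spectrally_positive_def hermitian_diff)
  show thesis
  proof (rule that)
    show "spectrally_positive (sqrt_one_minus z)"
      by (rule spectrally_positiveI_norm[where s=1])
        (simp_all add: hermitian_sqrt_one_minus[OF \<open>hermitian z\<close> z]
          norm_one_minus_sqrt_one_minus_le[OF z])
    show "sqrt_one_minus z * sqrt_one_minus z = h * h"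
      using sqrt_one_minus_square[OF z] by (simp add: z_def)
    have "h * z = z * h" by (simp add: z_def algebra_simps)
    then show "sqrt_one_minus z * h = h * sqrt_one_minus z"
      using sqrt_one_minus_commute[OF z] by simp
  qed
qed

lemma spectrally_positive_diff_abs:
  fixes a h :: "'a::cstar_algebra"
  assumes a: "spectrally_positive a" and h: "hermitian h"
    and square: "a * a = h * h" and commute: "a * h = h * a"
  shows "spectrally_positive (a - h)"
  unfolding spectrally_positive_def
proof (intro conjI allI impI)
  show "hermitian (a - h)" using a h by (simp add: spectrally_positive_def hermitian_diff)
  fix \<mu> :: real
  assume "\<mu> > 0"
  have "(a - h + of_real \<mu>) * (a + h + of_real \<mu>) = scaleR (2 * \<mu>) (a + of_real (\<mu> / 2))"
    and "(a + h + of_real \<mu>) * (a - h + of_real \<mu>) = scaleR (2 * \<mu>) (a + of_real (\<mu> / 2))"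
    by (simp_all add: of_real_def algebra_simps square commute scaleR_2[symmetric] del: scaleR_2)
  moreover have "invertible_elem (scaleR (2 * \<mu>) (a + of_real (\<mu> / 2)))"
    using \<open>\<mu> > 0\<close> by (intro invertible_elem_scaleR spectrally_positive_invertible[OF a]) simp_all
  ultimately show "invertible_elem (a - h + of_real \<mu>)"
    using invertible_elem_commuting_factor by metis
qed

lemma cstar_mult_eq_0_if_neg_spectrally_positive:
  fixes y :: "'a::cstar_algebra"
  assumes "spectrally_positive (- (cstar y * y))"
  shows "cstar y * y = 0"
proof (rule spectrally_positive_antisym[OF _ assms])
  define p where "p = y + cstar y"
  define q where "q = of_complex \<i> * (y - cstar y)"
  have "hermitian p" by (simp add: p_def hermitian_def cstar_add cstar_cstar add.commute)
  have "hermitian q" by (simp add: q_def hermitian_imaginary_part)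
  have ii: "of_complex \<i> * of_complex \<i> = (- 1 :: 'a)"
    by (simp add: of_complex_minus flip: of_complex_mult)
  have "q * q = (of_complex \<i> * of_complex \<i>) * ((y - cstar y) * (y - cstar y))"
    by (simp add: q_def mult.assoc mult_of_complex_left[of "y - cstar y"])
  then have "q * q = - ((y - cstar y) * (y - cstar y))" by (simp add: ii)
  then have "p * p + q * q = scaleR 2 (y * cstar y + cstar y * y)"
    by (simp add: p_def algebra_simps scaleR_2)
  then have "y * cstar y = scaleR (1/2) (p * p + q * q) + - (cstar y * y)"
    by simp
  moreover have "spectrally_positive (scaleR (1/2) (p * p + q * q) + - (cstar y * y))"
    using \<open>hermitian p\<close> \<open>hermitian q\<close> assms
    by (intro spectrally_positive_add spectrally_positive_scaleR spectrally_positive_square) simp_all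
  ultimately have "spectrally_positive (y * cstar y)" by (simp only:)
  then show "spectrally_positive (cstar y * y)"
    unfolding spectrally_positive_def
    using invertible_elem_of_real_add_mult_commute[of _ y "cstar y"]
    by (simp add: hermitian_cstar_mult add.commute)
qed

text \<open>Kelley and Vaught: with \<open>d = \<bar>h\<bar> - h \<ge> 0\<close> for \<open>h = v\<^sup>* v\<close> one has \<open>h d = - d\<^sup>2 / 2\<close>,
  so \<open>-(v d)\<^sup>* (v d) = d\<^sup>3 / 2 \<ge> 0\<close>; this forces \<open>d\<^sup>3 = 0\<close>, hence \<open>d = 0\<close> and \<open>h = \<bar>h\<bar>\<close>.\<close>
lemma spectrally_positive_cstar_mult_of_norm_le_1:
  fixes v :: "'a::cstar_algebra"
  assumes "norm (cstar v * v) \<le> 1"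
  shows "spectrally_positive (cstar v * v)"
proof -
  define h where "h = cstar v * v"
  have h: "hermitian h" unfolding h_def by (rule hermitian_cstar_mult)
  obtain a where a: "spectrally_positive a" and square: "a * a = h * h" and commute: "a * h = h * a"
    using hermitian_abs[OF h] assms by (auto simp: h_def)
  define d where "d = a - h"
  have d: "spectrally_positive d"
    unfolding d_def by (rule spectrally_positive_diff_abs[OF a h square commute])
  then obtain k where k: "hermitian k" "k * k = d" by (rule spectrally_positive_sqrt)
  have "hermitian d" using d by (simp add: spectrally_positive_def)
  have hd: "h * d = - scaleR (1/2) (d * d)"
    by (simp add: d_def algebra_simps square commute scaleR_2[symmetric] del: scaleR_2)
  have "cstar (v * d) * (v * d) = d * (h * d)"
    using \<open>hermitian d\<close> by (simp add: h_def hermitian_def cstar_mult mult.assoc)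
  also have "\<dots> = - scaleR (1/2) ((k * k * k) * (k * k * k))"
    by (simp add: hd) (simp add: mult.assoc flip: k(2))
  finally have vd: "cstar (v * d) * (v * d) = - scaleR (1/2) ((k * k * k) * (k * k * k))" .
  have "hermitian (k * k * k)" using k(1) by (simp add: hermitian_def cstar_mult mult.assoc)
  then have "spectrally_positive (scaleR (1/2) ((k * k * k) * (k * k * k)))"
    by (intro spectrally_positive_scaleR spectrally_positive_square) simp_all
  then have "spectrally_positive (- (cstar (v * d) * (v * d)))" by (simp add: vd)
  then have "d * (h * d) = 0"
    using cstar_mult_eq_0_if_neg_spectrally_positive \<open>cstar (v * d) * (v * d) = d * (h * d)\<close>
    by metis
  then have "d ^ 3 = 0" by (simp add: hd numeral_3_eq_3 mult.assoc)
  then have "d = 0" by (rule hermitian_nilpotent[OF \<open>hermitian d\<close>])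
  then show ?thesis using a by (simp add: d_def h_def)
qed

lemma spectrally_positive_cstar_mult:
  fixes v :: "'a::cstar_algebra"
  shows "spectrally_positive (cstar v * v)"
proof (cases "v = 0")
  case False
  define w where "w = scaleR (1 / norm v) v"
  have vw: "cstar v * v = scaleR (norm v * norm v) (cstar w * w)"
    using False by (simp add: w_def cstar_scaleR)
  have "norm (cstar w * w) = 1"
    using False by (simp add: w_def cstar_scaleR cstar_identity)
  then have "spectrally_positive (cstar w * w)"
    by (intro spectrally_positive_cstar_mult_of_norm_le_1) simp
  then show ?thesis unfolding vw by (rule spectrally_positive_scaleR) simp
qed simp

lemma le_two_sqrt_mult_sqrt_of_quadratic_bound:
  fixes x \<alpha> \<beta> :: real
  assumes bound: "\<And>t. \<bar>t\<bar> * x \<le> \<alpha> + t\<^sup>2 * \<beta>" and "0 \<le> \<alpha>" and "0 \<le> \<beta>"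
  shows "x \<le> 2 * (sqrt \<alpha> * sqrt \<beta>)"
proof (rule ccontr)
  assume "\<not> ?thesis"
  moreover have "0 \<le> 2 * (sqrt \<alpha> * sqrt \<beta>)" using assms(2,3) by simp
  ultimately have x: "x > 2 * (sqrt \<alpha> * sqrt \<beta>)" "x > 0" by linarith+
  consider "\<beta> = 0" | "\<alpha> = 0" "\<beta> > 0" | "\<alpha> > 0" "\<beta> > 0"
    using assms(2,3) by fastforce
  then show False
  proof cases
    case 1
    then show False using bound[of "(\<alpha> + 1) / x"] x(2) by simp
  next
    case 2
    then have "x / (2 * \<beta>) * x \<le> (x / (2 * \<beta>))\<^sup>2 * \<beta>" using bound[of "x / (2 * \<beta>)"] x(2) by simp
    then show False using 2 x(2) by (simp add: power2_eq_square field_simps)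
  next
    case 3
    define t where "t = sqrt \<alpha> / sqrt \<beta>"
    have "t > 0" "t\<^sup>2 * \<beta> = \<alpha>" using 3 by (simp_all add: t_def power_divide)
    then have "t * x \<le> 2 * \<alpha>" using bound[of t] by simp
    moreover have "2 * \<alpha> = t * (2 * (sqrt \<alpha> * sqrt \<beta>))"
      using 3 by (simp add: t_def)
    ultimately show False using x(1) \<open>t > 0\<close> by simp
  qed
qed

lemma norm_le_of_spectrally_positive_quadratic:
  fixes a c H :: "'a::cstar_algebra"
  assumes a: "hermitian a" and c: "hermitian c" and H: "hermitian H"
    and pos: "\<And>t. spectrally_positive (a + scaleR (t\<^sup>2) c - scaleR t H)"
  shows "norm H \<le> 2 * (sqrt (norm a) * sqrt (norm c))"
proof (rule le_two_sqrt_mult_sqrt_of_quadratic_bound)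
  fix t :: real
  define p where "p = a + scaleR (t\<^sup>2) c"
  have "hermitian p" using a c by (simp add: p_def hermitian_add hermitian_scaleR)
  then have p: "spectrally_positive (of_real (norm p) - p)"
    by (intro spectrally_positiveI_norm[where s="norm p"]) (simp_all add: hermitian_diff)
  have "spectrally_positive (of_real (norm p) - scaleR t H)"
    using spectrally_positive_add[OF p pos[of t]] by (simp add: p_def)
  moreover have "spectrally_positive (of_real (norm p) + scaleR t H)"
    using spectrally_positive_add[OF p pos[of "- t"]] by (simp add: p_def)
  ultimately have "norm (scaleR t H) \<le> norm p"
    using H by (intro norm_le_of_spectrally_positive) (simp_all add: hermitian_scaleR)
  also have "\<dots> \<le> norm a + t\<^sup>2 * norm c"
    using norm_triangle_ineq[of a "scaleR (t\<^sup>2) c"] by (simp add: p_def)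
  finally show "\<bar>t\<bar> * norm H \<le> norm a + t\<^sup>2 * norm c" by simp
qed simp_all

section \<open>Completely positive maps\<close>

context
  fixes T :: "'b::cstar_algebra \<Rightarrow> 'a::cstar_algebra"
  assumes cp: "cp_map T"
begin

lemma cp_map_add: "T (x + y) = T x + T y"
  using cp by (simp add: cp_map_def)

lemma cp_map_1: "T 1 = 1"
  using cp by (simp add: cp_map_def)

lemma cp_map_of_complex_mult: "T (of_complex c * x) = of_complex c * T x"
  using cp by (simp add: cp_map_def flip: scaleC_conv_of_complex)

lemma cp_map_diff: "T (x - y) = T x - T y"
  using cp_map_of_complex_mult[of "- 1" y] cp_map_add[of x "- y"] by (simp add: of_complex_minus)

lemma cp_map_scaleR: "T (scaleR r x) = scaleR r (T x)"
  using cp_map_of_complex_mult[of "complex_of_real r" x] by (simp add: scaleR_conv_of_real)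

text \<open>Complete positivity applied to the positive matrix
  \<open>[[1, x], [cstar x, cstar x * x]] = cstar Y * Y\<close> with \<open>Y = [[1, x], [0, 0]]\<close>.\<close>
lemma cp_map_two_by_two:
  obtains a0 a1 b0 b1 where "cstar a0 * a0 + cstar a1 * a1 = 1"
    and "cstar a0 * b0 + cstar a1 * b1 = T x"
    and "cstar b0 * a0 + cstar b1 * a1 = T (cstar x)"
    and "cstar b0 * b0 + cstar b1 * b1 = T (cstar x * x)"
proof -
  define Y :: "nat \<Rightarrow> nat \<Rightarrow> 'b" where "Y k j = (if k = 0 then (if j = 0 then 1 else x) else 0)"
    for k j
  define X where "X i j = (\<Sum>k<2::nat. cstar (Y k i) * Y k j)" for i j
  have "mat_positive 2 X"
    unfolding mat_positive_def by (rule exI[of _ Y]) (simp add: X_def)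
  then have "mat_positive 2 (\<lambda>i j. T (X i j))"
    using cp by (simp add: cp_map_def)
  then obtain W where W: "\<And>i j. i < 2 \<Longrightarrow> j < 2 \<Longrightarrow> T (X i j) = (\<Sum>k<2::nat. cstar (W k i) * W k j)"
    unfolding mat_positive_def by blast
  have X: "X 0 0 = 1" "X 0 1 = x" "X 1 0 = cstar x" "X 1 1 = cstar x * x"
    by (simp_all add: X_def Y_def numeral_2_eq_2)
  show thesis
  proof (rule that)
    show "cstar (W 0 0) * W 0 0 + cstar (W 1 0) * W 1 0 = 1"
      using W[of 0 0] X by (simp add: cp_map_1 numeral_2_eq_2)
    show "cstar (W 0 0) * W 0 1 + cstar (W 1 0) * W 1 1 = T x"
      using W[of 0 1] X by (simp add: numeral_2_eq_2)
    show "cstar (W 0 1) * W 0 0 + cstar (W 1 1) * W 1 0 = T (cstar x)"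
      using W[of 1 0] X by (simp add: numeral_2_eq_2)
    show "cstar (W 0 1) * W 0 1 + cstar (W 1 1) * W 1 1 = T (cstar x * x)"
      using W[of 1 1] X by (simp add: numeral_2_eq_2)
  qed
qed

lemma cp_map_cstar: "T (cstar x) = cstar (T x)"
proof -
  obtain a0 a1 b0 b1 where tx: "cstar a0 * b0 + cstar a1 * b1 = T x"
    and "cstar b0 * a0 + cstar b1 * a1 = T (cstar x)"
    by (rule cp_map_two_by_two)
  moreover have "cstar (T x) = cstar b0 * a0 + cstar b1 * a1"
    unfolding tx[symmetric] by (simp add: cstar_add cstar_mult cstar_cstar)
  ultimately show ?thesis by simp
qed

lemma cp_form_eq_sum_cstar_mult:
  obtains w0 w1 where "cp_form T z z = cstar w0 * w0 + cstar w1 * w1"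
proof -
  obtain a0 a1 b0 b1 where one: "cstar a0 * a0 + cstar a1 * a1 = 1"
    and tz: "cstar a0 * b0 + cstar a1 * b1 = T z"
    and tz': "cstar b0 * a0 + cstar b1 * a1 = T (cstar z)"
    and tzz: "cstar b0 * b0 + cstar b1 * b1 = T (cstar z * z)"
    by (rule cp_map_two_by_two)
  let ?t = "T z"
  have "cstar (b0 - a0 * ?t) * (b0 - a0 * ?t) + cstar (b1 - a1 * ?t) * (b1 - a1 * ?t)
      = (cstar b0 * b0 + cstar b1 * b1) - (cstar b0 * a0 + cstar b1 * a1) * ?t
        - cstar ?t * (cstar a0 * b0 + cstar a1 * b1)
        + cstar ?t * (cstar a0 * a0 + cstar a1 * a1) * ?t"
    by (simp add: cstar_diff cstar_mult algebra_simps)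
  also have "\<dots> = cp_form T z z"
    unfolding one tz tz' tzz cp_form_def cp_map_cstar by simp
  finally show thesis by (intro that) (rule sym)
qed

lemma spectrally_positive_cp_form: "spectrally_positive (cp_form T z z)"
  by (rule cp_form_eq_sum_cstar_mult[of z])
    (simp add: spectrally_positive_add spectrally_positive_cstar_mult)

lemma cp_form_add_imaginary_mult:
  assumes x: "hermitian x" and y: "hermitian y" and "x * y = y * x"
  shows "cp_form T (x + of_complex (\<i> * t) * y) (x + of_complex (\<i> * t) * y)
    = cp_form T x x + scaleR (t\<^sup>2) (cp_form T y y) - scaleR t (of_complex \<i> * (T x * T y - T y * T x))"
proof -
  let ?c = "of_complex (\<i> * complex_of_real t)"
  have Tx: "hermitian (T x)" and Ty: "hermitian (T y)"
    using x y by (simp_all add: hermitian_def flip: cp_map_cstar)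
  have "T (x + ?c * y) = T x + ?c * T y"
    by (simp add: cp_map_add cp_map_of_complex_mult)
  moreover have "cstar (x + ?c * y) * (x + ?c * y) = x * x + scaleR (t\<^sup>2) (y * y)"
    using cstar_mult_add_imaginary[OF x y, of t] assms(3) by simp
  ultimately have "cp_form T (x + ?c * y) (x + ?c * y)
      = T (x * x + scaleR (t\<^sup>2) (y * y))
        - (T x * T x + scaleR (t\<^sup>2) (T y * T y) + ?c * (T x * T y - T y * T x))"
    unfolding cp_form_def by (simp add: cstar_mult_add_imaginary[OF Tx Ty])
  also have "\<dots> = cp_form T x x + scaleR (t\<^sup>2) (cp_form T y y)
      - scaleR t (of_complex \<i> * (T x * T y - T y * T x))"
    using x y Tx Ty
    by (simp add: cp_form_def cp_map_add cp_map_diff cp_map_scaleR of_complex_imaginary_mult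
        hermitian_def algebra_simps)
  finally show ?thesis .
qed

end

theorem theorem3:
  fixes T :: "'b::cstar_algebra \<Rightarrow> 'a::cstar_algebra"
    and B B' :: 'b
  assumes "von_neumann_algebra TYPE('a)" and "von_neumann_algebra TYPE('b)"
    and "cp_map T"
    and "cstar B = B" and "cstar B' = B'"
    and "B * B' = B' * B"
  shows "sqrt (norm (cp_form T B B)) * sqrt (norm (cp_form T B' B'))
           \<ge> 1 / 2 * norm (T B * T B' - T B' * T B)"
proof -
  have B: "hermitian B" "hermitian B'" using assms(4,5) by (simp_all add: hermitian_def)
  have "cstar (T B * T B') = T B' * T B"
    using assms(4,5) by (simp add: cstar_mult flip: cp_map_cstar[OF assms(3)])
  then have "hermitian (of_complex \<i> * (T B * T B' - T B' * T B))"
    using hermitian_imaginary_part[of "T B * T B'"] by simp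
  moreover have "spectrally_positive (cp_form T B B + scaleR (t\<^sup>2) (cp_form T B' B')
      - scaleR t (of_complex \<i> * (T B * T B' - T B' * T B)))" for t
    using spectrally_positive_cp_form[OF assms(3)]
    unfolding cp_form_add_imaginary_mult[OF assms(3) B assms(6), symmetric] .
  ultimately have "norm (of_complex \<i> * (T B * T B' - T B' * T B))
      \<le> 2 * (sqrt (norm (cp_form T B B)) * sqrt (norm (cp_form T B' B')))"
    using spectrally_positive_cp_form[OF assms(3)]
    by (intro norm_le_of_spectrally_positive_quadratic) (simp_all add: spectrally_positive_def)
  then show ?thesis by (simp add: norm_of_complex_mult)
qed

end
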